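(* Let $X$ be a finite group with $|X|=n$ and let $S\subseteq X$ be a generating set with $|S|=d$ and $S^{-1}=S$. Let $G$ be the Cayley graph $(X,S)$, and suppose $G$ is not bipartite. Then $$h_{out}(G)\leq 200\,\beta_{out}(G).$$
   Context: The Cayley graph $(X,S)$ has vertex set $X$ and edges $g\sim gs$ for all $g\in X$, $s\in S$. For a vertex set $A$, $\partial_{out}(A)$ is the set of vertices not in $A$ having a neighbor in $A$, and $I(A)$ is the number of vertices of $A$ having a neighbor in $A$. The vertex expansion is $h_{out}(G)=\min\{|\partial_{out}(A)|/|A| : A\subseteq X,\ 0<|A|\le n/2\}$. For disjoint $L,R\subseteq X$ with $L\cup R\ne\emptyset$, $b_{out}(L,R)=\dfrac{I(L)+I(R)+|\partial_{out}(L\cup R)|}{|L\cup R|}$, and $\beta_{out}(G)=\min_{L,R}b_{out}(L,R)$ over all such pairs. *)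

theory Defs
  imports "HOL-Algebra.Algebra"
begin

text \<open>Cayley graph (X,S) of a group G with X = carrier G: edges g ~ g s for s in S.
  Vertex v has a neighbour in A iff v s is in A for some s in S (S is symmetric).\<close>

definition has_nbr_in :: "('a, 'b) monoid_scheme \<Rightarrow> 'a set \<Rightarrow> 'a set \<Rightarrow> 'a \<Rightarrow> bool" where
  "has_nbr_in G S A v \<longleftrightarrow> (\<exists>s\<in>S. v \<otimes>\<^bsub>G\<^esub> s \<in> A)"

definition out_boundary :: "('a, 'b) monoid_scheme \<Rightarrow> 'a set \<Rightarrow> 'a set \<Rightarrow> 'a set" where
  "out_boundary G S A = {v \<in> carrier G. v \<notin> A \<and> has_nbr_in G S A v}"

definition inner_count :: "('a, 'b) monoid_scheme \<Rightarrow> 'a set \<Rightarrow> 'a set \<Rightarrow> nat" where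
  "inner_count G S A = card {v \<in> A. has_nbr_in G S A v}"

definition cayley_bipartite :: "('a, 'b) monoid_scheme \<Rightarrow> 'a set \<Rightarrow> bool" where
  "cayley_bipartite G S \<longleftrightarrow> (\<exists>L R. L \<union> R = carrier G \<and> L \<inter> R = {} \<and>
     (\<forall>g\<in>carrier G. \<forall>s\<in>S. \<not> (g \<in> L \<and> g \<otimes>\<^bsub>G\<^esub> s \<in> L) \<and> \<not> (g \<in> R \<and> g \<otimes>\<^bsub>G\<^esub> s \<in> R)))"

definition h_out :: "('a, 'b) monoid_scheme \<Rightarrow> 'a set \<Rightarrow> real" where
  "h_out G S = Min {real (card (out_boundary G S A)) / real (card A) | A.
      A \<subseteq> carrier G \<and> 0 < card A \<and> real (card A) \<le> real (card (carrier G)) / 2}"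

definition b_out :: "('a, 'b) monoid_scheme \<Rightarrow> 'a set \<Rightarrow> 'a set \<Rightarrow> 'a set \<Rightarrow> real" where
  "b_out G S L R = real (inner_count G S L + inner_count G S R + card (out_boundary G S (L \<union> R)))
      / real (card (L \<union> R))"

definition beta_out :: "('a, 'b) monoid_scheme \<Rightarrow> 'a set \<Rightarrow> real" where
  "beta_out G S = Min {b_out G S L R | L R.
      L \<subseteq> carrier G \<and> R \<subseteq> carrier G \<and> L \<inter> R = {} \<and> L \<union> R \<noteq> {}}"

end

theory Submission
  imports Defs
begin

text \<open>
  Take (L, R) attaining beta_out and let D consist of the vertices of L or R with a neighbour on
  their own side together with the outer boundary of L \<union> R, so that every neighbour of L outside D
  lies in R and vice versa. If h_out > 200 beta_out, then |D| is tiny compared with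
  h_out |L \<union> R|, and by expansion every set whose outer boundary has at most 2|D| vertices is
  either tiny or contains 97% of the group. This applies to L \<union> R and, for each y, to the two
  sets of points y h of L \<union> R (with h \<in> L \<union> R) lying on the same, resp. the opposite, side as h,
  because their boundaries lie in D \<union> yD. Exactly one of the two is large, and intersecting
  translates of large sets shows that "y keeps the sides" is a homomorphism to Z/2. A generator
  keeping the sides would make both parity classes of L \<union> R nearly closed under right
  multiplication, so each would have at most (n + |D|)/2 elements; but every y contributes more
  than 0.97 n to the sum over both classes P of |P \<inter> yP|, which by double counting is the sum
  of the |P|^2. Hence every generator changes the parity, and the parity classes form a
  bipartition of the graph.
\<close>

lemma card_add_card_le_card_Int:
  assumes "finite U" "P \<subseteq> U" "Q \<subseteq> U"
  shows "card P + card Q \<le> card (P \<inter> Q) + card U"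
proof -
  have "card P + card Q = card (P \<union> Q) + card (P \<inter> Q)"
    using assms by (intro card_Un_Int) (auto intro: finite_subset)
  moreover have "card (P \<union> Q) \<le> card U" using assms by (intro card_mono) auto
  ultimately show ?thesis by linarith
qed

context group
begin

lemma card_l_coset:
  assumes "A \<subseteq> carrier G" "y \<in> carrier G"
  shows "card (y <# A) = card A"
proof -
  have "y <# A = (\<lambda>a. y \<otimes> a) ` A" by (auto simp: l_coset_def)
  then show ?thesis using assms by (simp add: card_image inj_on_g')
qed

lemma sum_card_Int_l_coset:
  assumes fin: "finite (carrier G)" and P: "P \<subseteq> carrier G"
  shows "(\<Sum>y\<in>carrier G. card (P \<inter> (y <# P))) = card P * card P"
proof -
  have "finite P" using P fin finite_subset by blast
  have "bij_betw (\<lambda>(y, g). (g, inv y \<otimes> g)) (SIGMA y:carrier G. P \<inter> (y <# P)) (P \<times> P)"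
  proof (rule bij_betw_byWitness[where f' = "\<lambda>(p, q). (p \<otimes> inv q, p)"])
    show "\<forall>a\<in>SIGMA y:carrier G. P \<inter> (y <# P). (\<lambda>(p, q). (p \<otimes> inv q, p)) ((\<lambda>(y, g). (g, inv y \<otimes> g)) a) = a"
      using P by (auto simp: l_coset_def subset_iff m_assoc[symmetric]) (simp add: m_assoc)
    show "\<forall>a\<in>P \<times> P. (\<lambda>(y, g). (g, inv y \<otimes> g)) ((\<lambda>(p, q). (p \<otimes> inv q, p)) a) = a"
      using P by (auto simp: m_assoc inv_mult_group subset_iff)
    show "(\<lambda>(y, g). (g, inv y \<otimes> g)) ` (SIGMA y:carrier G. P \<inter> (y <# P)) \<subseteq> P \<times> P"
      using P by (auto simp: l_coset_def subset_iff m_assoc[symmetric])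
    have "(p \<otimes> inv q, p) \<in> (SIGMA y:carrier G. P \<inter> (y <# P))" if "p \<in> P" "q \<in> P" for p q
    proof -
      from that P have "p = p \<otimes> inv q \<otimes> q" "p \<otimes> inv q \<in> carrier G"
        by (auto simp: m_assoc subset_iff)
      with that show ?thesis unfolding l_coset_def by blast
    qed
    then show "(\<lambda>(p, q). (p \<otimes> inv q, p)) ` (P \<times> P) \<subseteq> (SIGMA y:carrier G. P \<inter> (y <# P))"
      by auto
  qed
  then have "card (SIGMA y:carrier G. P \<inter> (y <# P)) = card P * card P"
    by (simp add: bij_betw_same_card card_cartesian_product)
  with fin \<open>finite P\<close> show ?thesis by simp
qed

lemma card_add_card_le_card_right_mult_stays:
  assumes fin: "finite (carrier G)" and P: "P \<subseteq> carrier G" and s: "s \<in> carrier G"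
  shows "card P + card P \<le> card {g \<in> P. g \<otimes> s \<in> P} + card (carrier G)"
proof -
  define Q where "Q = (\<lambda>p. p \<otimes> inv s) ` P"
  have "card Q = card P" unfolding Q_def using P s by (simp add: card_image inj_on_g)
  moreover have "Q \<subseteq> carrier G" unfolding Q_def using P s by auto
  moreover have "P \<inter> Q = {g \<in> P. g \<otimes> s \<in> P}"
  proof -
    have "g \<in> Q \<longleftrightarrow> g \<otimes> s \<in> P" if g: "g \<in> carrier G" for g
    proof
      assume "g \<in> Q"
      then obtain p where "p \<in> P" "g = p \<otimes> inv s" unfolding Q_def by blast
      then show "g \<otimes> s \<in> P" using P s by (auto simp: m_assoc subset_iff)
    next
      assume "g \<otimes> s \<in> P"
      moreover have "g = g \<otimes> s \<otimes> inv s" using g s by (simp add: m_assoc)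
      ultimately show "g \<in> Q" unfolding Q_def by blast
    qed
    then show ?thesis using P by auto
  qed
  ultimately show ?thesis using card_add_card_le_card_Int[OF fin P] by metis
qed

end

locale cayley_graph = group G for G :: "('a, 'b) monoid_scheme" (structure) +
  fixes S :: "'a set"
  assumes finite_carrier: "finite (carrier G)"
    and generators_subset: "S \<subseteq> carrier G"
    and inv_generator: "s \<in> S \<Longrightarrow> inv s \<in> S"
begin

definition bipartite_except :: "'a set \<Rightarrow> 'a set \<Rightarrow> 'a set \<Rightarrow> bool" where
  "bipartite_except L R D \<longleftrightarrow>
     (\<forall>v\<in>carrier G. \<forall>s\<in>S. (v \<otimes> s \<in> L \<longrightarrow> v \<in> R \<union> D) \<and> (v \<otimes> s \<in> R \<longrightarrow> v \<in> L \<union> D))"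

lemma bipartite_except_commute: "bipartite_except L R D \<longleftrightarrow> bipartite_except R L D"
  unfolding bipartite_except_def by blast

lemma out_boundary_subset_if_bipartite_except:
  "bipartite_except L R D \<Longrightarrow> out_boundary G S (L \<union> R) \<subseteq> D"
  unfolding bipartite_except_def out_boundary_def has_nbr_in_def by blast

lemma out_boundary_Int_subset_if_bipartite_except:
  assumes "bipartite_except L1 R1 D1" "bipartite_except L2 R2 D2"
  shows "out_boundary G S ((L1 \<inter> L2) \<union> (R1 \<inter> R2)) \<subseteq> D1 \<union> D2"
  using assms unfolding bipartite_except_def out_boundary_def has_nbr_in_def by blast

lemma bipartite_except_l_coset:
  assumes "bipartite_except L R D" "L \<subseteq> carrier G" "R \<subseteq> carrier G" "y \<in> carrier G"
  shows "bipartite_except (y <# L) (y <# R) (y <# D)"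
  unfolding bipartite_except_def
proof (intro ballI conjI impI)
  fix v s assume v: "v \<in> carrier G" and s: "s \<in> S"
  define w where "w = inv y \<otimes> v"
  have w: "w \<in> carrier G" "v = y \<otimes> w" using v \<open>y \<in> carrier G\<close> by (auto simp: w_def m_assoc[symmetric])
  have "s \<in> carrier G" using s generators_subset by auto
  have mem_l_coset_iff: "y \<otimes> x \<in> y <# A \<longleftrightarrow> x \<in> A" if "x \<in> carrier G" "A \<subseteq> carrier G" for x A
    using that \<open>y \<in> carrier G\<close> by (auto simp: l_coset_def subset_iff)
  have mem_l_coset: "y \<otimes> x \<in> y <# A" if "x \<in> A" for x A
    using that by (auto simp: l_coset_def)
  have "v \<otimes> s = y \<otimes> (w \<otimes> s)" using w \<open>s \<in> carrier G\<close> \<open>y \<in> carrier G\<close> by (simp add: m_assoc)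
  then show "v \<otimes> s \<in> y <# L \<Longrightarrow> v \<in> (y <# R) \<union> (y <# D)"
    and "v \<otimes> s \<in> y <# R \<Longrightarrow> v \<in> (y <# L) \<union> (y <# D)"
    using assms w s \<open>s \<in> carrier G\<close> unfolding bipartite_except_def by (auto simp: mem_l_coset_iff dest: mem_l_coset)
qed

lemma bipartite_except_few_defects:
  assumes sides: "L \<subseteq> carrier G" "R \<subseteq> carrier G" "L \<union> R \<noteq> {}"
  obtains D where "D \<subseteq> carrier G" "bipartite_except L R D"
    "real (card D) \<le> b_out G S L R * card (L \<union> R)"
proof -
  define D where "D = out_boundary G S (L \<union> R) \<union> {v \<in> L. has_nbr_in G S L v} \<union> {v \<in> R. has_nbr_in G S R v}"
  let ?e = "inner_count G S L + inner_count G S R + card (out_boundary G S (L \<union> R))"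
  have "card D \<le> card (out_boundary G S (L \<union> R) \<union> {v \<in> L. has_nbr_in G S L v})
      + card {v \<in> R. has_nbr_in G S R v}"
    unfolding D_def by (rule card_Un_le)
  also have "\<dots> \<le> ?e"
    unfolding inner_count_def
    using card_Un_le[of "out_boundary G S (L \<union> R)" "{v \<in> L. has_nbr_in G S L v}"] by linarith
  finally have "card D \<le> ?e" .
  moreover have "0 < card (L \<union> R)"
    using sides finite_carrier by (simp add: card_gt_0_iff finite_subset)
  moreover have "D \<subseteq> carrier G" using sides unfolding D_def out_boundary_def by auto
  moreover have "bipartite_except L R D"
    unfolding D_def bipartite_except_def out_boundary_def has_nbr_in_def by blast
  ultimately show ?thesis using that unfolding b_out_def by simp
qed

lemma h_out_mult_card_le:
  assumes A: "A \<subseteq> carrier G" and half: "real (card A) \<le> real (card (carrier G)) / 2"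
  shows "h_out G S * card A \<le> card (out_boundary G S A)"
proof (cases "card A = 0")
  case False
  let ?ratio = "\<lambda>A. real (card (out_boundary G S A)) / real (card A)"
  have "{?ratio A | A. A \<subseteq> carrier G \<and> 0 < card A \<and> real (card A) \<le> real (card (carrier G)) / 2}
      \<subseteq> ?ratio ` Pow (carrier G)"
    by auto
  then have "h_out G S \<le> ?ratio A"
    unfolding h_out_def using A half False finite_carrier
    by (intro Min_le) (auto intro: finite_subset)
  then show ?thesis using False by (simp add: pos_le_divide_eq)
qed simp

lemma h_out_le_two:
  assumes "2 \<le> card (carrier G)"
  shows "h_out G S \<le> 2"
proof -
  define k where "k = card (carrier G) div 2"
  obtain A where A: "A \<subseteq> carrier G" "card A = k"
    using obtain_subset_with_card_n[of k "carrier G"] unfolding k_def by auto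
  have "2 * card A \<le> card (carrier G)" using A(2) unfolding k_def by simp
  then have "real (card A) \<le> real (card (carrier G)) / 2" by linarith
  then have "h_out G S * k \<le> card (out_boundary G S A)"
    using h_out_mult_card_le[OF A(1)] A(2) by simp
  also have "\<dots> \<le> card (carrier G - A)"
    using finite_carrier by (intro of_nat_mono card_mono) (auto simp: out_boundary_def)
  also have "\<dots> = card (carrier G) - k"
    using A finite_carrier by (simp add: card_Diff_subset finite_subset)
  also have "\<dots> \<le> 2 * k" using assms unfolding k_def of_nat_le_iff by presburger
  finally have "h_out G S * k \<le> 2 * k" by simp
  moreover have "0 < k" using assms unfolding k_def by simp
  ultimately show ?thesis by simp
qed

lemma out_boundary_exterior_subset:
  "out_boundary G S (carrier G - Z - out_boundary G S Z) \<subseteq> out_boundary G S Z"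
proof
  fix v assume "v \<in> out_boundary G S (carrier G - Z - out_boundary G S Z)"
  then obtain s where v: "v \<in> carrier G" "v \<notin> carrier G - Z - out_boundary G S Z" and s: "s \<in> S"
    and vs: "v \<otimes> s \<in> carrier G - Z - out_boundary G S Z"
    unfolding out_boundary_def has_nbr_in_def by auto
  have "v \<notin> Z"
  proof
    assume "v \<in> Z"
    have "v \<otimes> s \<otimes> inv s = v" using v s generators_subset by (auto simp: m_assoc)
    with \<open>v \<in> Z\<close> have "has_nbr_in G S Z (v \<otimes> s)"
      unfolding has_nbr_in_def using inv_generator[OF s] by (intro bexI[of _ "inv s"]) auto
    with vs show False unfolding out_boundary_def by auto
  qed
  with v show "v \<in> out_boundary G S Z" by blast
qed

lemma expansion_dichotomy:
  assumes Z: "Z \<subseteq> carrier G"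
  defines "n \<equiv> real (card (carrier G))" and "b \<equiv> real (card (out_boundary G S Z))"
  shows "h_out G S * card Z \<le> b \<or> h_out G S * (n - card Z - b) \<le> b"
proof (cases "real (card Z) \<le> n / 2")
  case True
  then show ?thesis using h_out_mult_card_le[OF Z] unfolding n_def b_def by blast
next
  case False
  define W where "W = carrier G - Z - out_boundary G S Z"
  have "out_boundary G S Z \<subseteq> carrier G - Z" unfolding out_boundary_def by auto
  then have "card (Z \<union> out_boundary G S Z) = card Z + card (out_boundary G S Z)"
    using Z finite_carrier by (intro card_Un_disjoint) (auto intro: finite_subset)
  moreover have "W = carrier G - (Z \<union> out_boundary G S Z)" unfolding W_def by auto
  moreover have "Z \<union> out_boundary G S Z \<subseteq> carrier G" using Z unfolding out_boundary_def by auto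
  ultimately have "card W + (card Z + card (out_boundary G S Z)) = card (carrier G)"
    using finite_carrier by (metis card_Diff_subset card_mono finite_subset le_add_diff_inverse2)
  then have "real (card W) = n - card Z - b" unfolding n_def b_def by simp
  moreover have "h_out G S * card W \<le> card (out_boundary G S W)"
    using False \<open>real (card W) = n - card Z - b\<close> unfolding W_def n_def b_def
    by (intro h_out_mult_card_le) auto
  moreover have "card (out_boundary G S W) \<le> b"
    unfolding W_def b_def using out_boundary_exterior_subset finite_carrier
    by (simp add: card_mono finite_subset out_boundary_def)
  ultimately show ?thesis by simp
qed

lemma beta_out_attained:
  assumes "carrier G \<noteq> {}"
  obtains L R where "L \<subseteq> carrier G" "R \<subseteq> carrier G" "L \<inter> R = {}" "L \<union> R \<noteq> {}"
    "beta_out G S = b_out G S L R"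
proof -
  let ?B = "{b_out G S L R | L R. L \<subseteq> carrier G \<and> R \<subseteq> carrier G \<and> L \<inter> R = {} \<and> L \<union> R \<noteq> {}}"
  have "?B \<subseteq> (\<lambda>(L, R). b_out G S L R) ` (Pow (carrier G) \<times> Pow (carrier G))" by auto
  then have "finite ?B" by (rule finite_subset) (simp add: finite_carrier)
  moreover have "b_out G S (carrier G) {} \<in> ?B" using assms by auto
  ultimately have "Min ?B \<in> ?B" using Min_in by blast
  then obtain L R where "L \<subseteq> carrier G" "R \<subseteq> carrier G" "L \<inter> R = {}" "L \<union> R \<noteq> {}"
    and "Min ?B = b_out G S L R"
    by blast
  then show ?thesis using that unfolding beta_out_def by simp
qed

end

locale near_bipartite = cayley_graph +
  fixes L R D :: "'a set"
  assumes L_subset: "L \<subseteq> carrier G" and R_subset: "R \<subseteq> carrier G"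
    and sides_disjoint: "L \<inter> R = {}"
    and D_subset: "D \<subseteq> carrier G"
    and bipartite_except_sides: "bipartite_except L R D"
    and two_le_card: "2 \<le> card (carrier G)"
    and few_defects: "200 * real (card D) < h_out G S * real (card (L \<union> R))"
begin

abbreviation n :: real where "n \<equiv> real (card (carrier G))"

abbreviation m :: real where "m \<equiv> real (card (L \<union> R))"

definition large :: "'a set \<Rightarrow> bool" where
  "large Z \<longleftrightarrow> 97 / 100 * n < real (card Z)"

lemma sides_subset: "L \<union> R \<subseteq> carrier G"
  using L_subset R_subset by blast

lemma m_le_n: "m \<le> n"
  using sides_subset finite_carrier by (simp add: card_mono)

lemma h_out_pos: "0 < h_out G S"
proof (rule ccontr)
  assume "\<not> 0 < h_out G S"
  then have "h_out G S * m \<le> 0" by (simp add: mult_nonpos_nonneg)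
  with few_defects show False by simp
qed

lemma m_pos: "0 < m"
proof -
  have "0 < h_out G S * m" using few_defects of_nat_0_le_iff[of "card D"] by linarith
  then show ?thesis using h_out_pos by (simp add: zero_less_mult_iff)
qed

lemma defects_small: "200 * real (card D) < 2 * m"
proof -
  have "h_out G S * m \<le> 2 * m" using h_out_le_two[OF two_le_card] by (simp add: mult_right_mono)
  then show ?thesis using few_defects by linarith
qed

lemma small_or_large:
  assumes Z: "Z \<subseteq> carrier G" and boundary: "card (out_boundary G S Z) \<le> 2 * card D"
  shows "real (card Z) < m / 100 \<or> large Z"
proof -
  let ?h = "h_out G S" and ?b = "real (card (out_boundary G S Z))"
  have b: "?b \<le> 2 * card D" using boundary by linarith
  have hb: "?b < ?h * (m / 100)" using b few_defects by simp
  show ?thesis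
    using expansion_dichotomy[OF Z]
  proof
    assume "?h * card Z \<le> ?b"
    then have "?h * card Z < ?h * (m / 100)" using hb by linarith
    then show ?thesis using h_out_pos by simp
  next
    assume "?h * (n - card Z - ?b) \<le> ?b"
    then have "?h * (n - card Z - ?b) < ?h * (m / 100)" using hb by linarith
    then have "n - card Z - ?b < m / 100" using h_out_pos by simp
    then show ?thesis using b defects_small m_le_n unfolding large_def by linarith
  qed
qed

lemma large_sides: "large (L \<union> R)"
proof -
  have "card (out_boundary G S (L \<union> R)) \<le> card D"
    using out_boundary_subset_if_bipartite_except[OF bipartite_except_sides] D_subset finite_carrier
    by (intro card_mono) (auto intro: finite_subset)
  then have "m < m / 100 \<or> large (L \<union> R)" using small_or_large[OF sides_subset] by simp
  then show ?thesis using m_pos by linarith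
qed

definition side_match :: "bool \<Rightarrow> 'a \<Rightarrow> 'a set" where
  "side_match b y = {g \<in> L \<union> R. \<exists>h \<in> L \<union> R. g = y \<otimes> h \<and> (g \<in> L \<longleftrightarrow> h \<in> L) = b}"

lemma side_match_eq:
  assumes "y \<in> carrier G"
  shows "side_match b y = (L \<inter> (y <# (if b then L else R))) \<union> (R \<inter> (y <# (if b then R else L)))"
  using sides_disjoint unfolding side_match_def l_coset_def by auto

lemma side_match_subset: "side_match b y \<subseteq> carrier G"
  using sides_subset unfolding side_match_def by auto

lemma finite_side_match: "finite (side_match b y)"
  using side_match_subset finite_carrier by (rule finite_subset)

lemma card_side_match_add:
  assumes y: "y \<in> carrier G"
  shows "card (side_match True y) + card (side_match False y) = card ((L \<union> R) \<inter> (y <# (L \<union> R)))"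
proof -
  have "side_match True y \<union> side_match False y = (L \<union> R) \<inter> (y <# (L \<union> R))"
    unfolding side_match_def l_coset_def by auto
  moreover have "side_match True y \<inter> side_match False y = {}"
    using y L_subset R_subset unfolding side_match_def by (auto simp: subset_iff)
  ultimately show ?thesis by (metis card_Un_disjoint finite_side_match)
qed

lemma side_match_small_or_large:
  assumes y: "y \<in> carrier G"
  shows "real (card (side_match b y)) < m / 100 \<or> large (side_match b y)"
proof (rule small_or_large[OF side_match_subset])
  have "bipartite_except (y <# L) (y <# R) (y <# D)" "bipartite_except (y <# R) (y <# L) (y <# D)"
    using bipartite_except_l_coset[OF bipartite_except_sides L_subset R_subset y] bipartite_except_commute
    by auto
  then have "out_boundary G S (side_match b y) \<subseteq> D \<union> (y <# D)"
    using out_boundary_Int_subset_if_bipartite_except[OF bipartite_except_sides] y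
    unfolding side_match_eq[OF y] by (cases b) auto
  moreover have "card (D \<union> (y <# D)) \<le> 2 * card D"
    using card_Un_le[of D "y <# D"] card_l_coset[OF D_subset y] by simp
  moreover have "finite (D \<union> (y <# D))"
    using finite_carrier D_subset y by (meson finite_Un finite_subset l_coset_subset_G)
  ultimately show "card (out_boundary G S (side_match b y)) \<le> 2 * card D"
    by (meson card_mono le_trans)
qed

definition side_preserving :: "'a \<Rightarrow> bool" where
  "side_preserving y \<longleftrightarrow> large (side_match True y)"

lemma large_side_match_iff:
  assumes y: "y \<in> carrier G"
  shows "large (side_match b y) \<longleftrightarrow> (b \<longleftrightarrow> side_preserving y)"
proof -
  let ?U = "(L \<union> R) \<inter> (y <# (L \<union> R))"
  have "card (L \<union> R) + card (y <# (L \<union> R)) \<le> card ?U + card (carrier G)"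
    using sides_subset y finite_carrier l_coset_subset_G by (intro card_add_card_le_card_Int) auto
  then have "2 * m - n \<le> card ?U" using card_l_coset[OF sides_subset y] by simp
  moreover have "card ?U \<le> card (carrier G)"
    using sides_subset finite_carrier by (intro card_mono) auto
  ultimately have "2 * m - n \<le> card (side_match True y) + card (side_match False y)"
    and "card (side_match True y) + card (side_match False y) \<le> n"
    using card_side_match_add[OF y] by simp_all
  then have "large (side_match True y) \<noteq> large (side_match False y)"
    using side_match_small_or_large[OF y, of True] side_match_small_or_large[OF y, of False]
      large_sides m_le_n unfolding large_def by linarith
  then show ?thesis unfolding side_preserving_def by (cases b) auto
qed

lemma card_Int_l_coset_large:
  assumes "P \<subseteq> carrier G" "Q \<subseteq> carrier G" "y \<in> carrier G" "large P" "large Q"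
  shows "94 / 100 * n < card (P \<inter> (y <# Q))"
proof -
  have "card P + card (y <# Q) \<le> card (P \<inter> (y <# Q)) + card (carrier G)"
    using assms finite_carrier l_coset_subset_G by (intro card_add_card_le_card_Int) auto
  then show ?thesis using assms card_l_coset[of Q y] unfolding large_def by simp
qed

lemma side_match_mult:
  assumes y: "y \<in> carrier G" and z: "z \<in> carrier G"
  shows "side_match b y \<inter> (y <# side_match c z) \<subseteq> side_match (b \<longleftrightarrow> c) (y \<otimes> z)"
proof
  fix g assume "g \<in> side_match b y \<inter> (y <# side_match c z)"
  then obtain h h' k where g: "g \<in> L \<union> R" "g = y \<otimes> h" "(g \<in> L \<longleftrightarrow> h \<in> L) = b"
    and h: "h \<in> L \<union> R" "g = y \<otimes> h'" "h' = z \<otimes> k" "(h' \<in> L \<longleftrightarrow> k \<in> L) = c"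
    and k: "k \<in> L \<union> R"
    unfolding side_match_def l_coset_def by blast
  have "h = h'" using g(2) h y z k sides_subset by (auto simp: subset_iff)
  then have "g = (y \<otimes> z) \<otimes> k" using h y z k sides_subset by (auto simp: subset_iff m_assoc)
  with g h k \<open>h = h'\<close> show "g \<in> side_match (b \<longleftrightarrow> c) (y \<otimes> z)"
    unfolding side_match_def by blast
qed

lemma side_preserving_mult:
  assumes y: "y \<in> carrier G" and z: "z \<in> carrier G"
  shows "side_preserving (y \<otimes> z) \<longleftrightarrow> (side_preserving y \<longleftrightarrow> side_preserving z)"
proof -
  let ?b = "side_preserving y" and ?c = "side_preserving z"
  have "94 / 100 * n < card (side_match ?b y \<inter> (y <# side_match ?c z))"
    using large_side_match_iff y z by (intro card_Int_l_coset_large side_match_subset) auto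
  also have "\<dots> \<le> card (side_match (?b \<longleftrightarrow> ?c) (y \<otimes> z))"
    using side_match_mult[OF y z] by (intro of_nat_mono card_mono finite_side_match)
  finally have "\<not> real (card (side_match (?b \<longleftrightarrow> ?c) (y \<otimes> z))) < m / 100"
    using m_le_n by linarith
  then have "large (side_match (?b \<longleftrightarrow> ?c) (y \<otimes> z))"
    using side_match_small_or_large y z by blast
  then show ?thesis using large_side_match_iff y z by simp
qed

definition parity_class :: "bool \<Rightarrow> 'a set" where
  "parity_class b = {g \<in> L \<union> R. (g \<in> L \<longleftrightarrow> side_preserving g) = b}"

lemma parity_class_subset: "parity_class b \<subseteq> carrier G"
  using sides_subset unfolding parity_class_def by auto

lemma side_match_subset_parity_classes:
  assumes y: "y \<in> carrier G"
  shows "side_match (side_preserving y) y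
    \<subseteq> (parity_class True \<inter> (y <# parity_class True)) \<union> (parity_class False \<inter> (y <# parity_class False))"
proof
  fix g assume "g \<in> side_match (side_preserving y) y"
  then obtain h where g: "g \<in> L \<union> R" and h: "h \<in> L \<union> R" and gh: "g = y \<otimes> h"
    and side: "(g \<in> L \<longleftrightarrow> h \<in> L) = side_preserving y"
    unfolding side_match_def by blast
  define b where "b = (h \<in> L \<longleftrightarrow> side_preserving h)"
  have "side_preserving g \<longleftrightarrow> (side_preserving y \<longleftrightarrow> side_preserving h)"
    using gh side_preserving_mult y h sides_subset by blast
  then have "g \<in> parity_class b" "h \<in> parity_class b"
    using g h side unfolding parity_class_def b_def by auto
  moreover have "g \<in> y <# parity_class b" using gh \<open>h \<in> parity_class b\<close> unfolding l_coset_def by blast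
  ultimately show "g \<in> (parity_class True \<inter> (y <# parity_class True)) \<union>
      (parity_class False \<inter> (y <# parity_class False))"
    by (cases b) auto
qed

lemma sum_squares_parity_classes:
  "97 / 100 * n * n \<le> real (card (parity_class True) * card (parity_class True))
     + real (card (parity_class False) * card (parity_class False))"
proof -
  let ?c = "\<lambda>y b. card (parity_class b \<inter> (y <# parity_class b))"
  have "97 / 100 * n < ?c y True + ?c y False" if y: "y \<in> carrier G" for y
  proof -
    have "97 / 100 * n < card (side_match (side_preserving y) y)"
      using large_side_match_iff[OF y] unfolding large_def by simp
    also have "\<dots> \<le> card ((parity_class True \<inter> (y <# parity_class True)) \<union>
        (parity_class False \<inter> (y <# parity_class False)))"
      using side_match_subset_parity_classes[OF y] parity_class_subset finite_carrier
      by (intro of_nat_mono card_mono) (auto intro: finite_subset)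
    also have "\<dots> \<le> ?c y True + ?c y False" unfolding of_nat_add[symmetric] of_nat_le_iff by (rule card_Un_le)
    finally show ?thesis by simp
  qed
  then have "(\<Sum>y\<in>carrier G. 97 / 100 * n) \<le> (\<Sum>y\<in>carrier G. real (?c y True + ?c y False))"
    by (intro sum_mono less_imp_le) auto
  also have "\<dots> = real ((\<Sum>y\<in>carrier G. ?c y True) + (\<Sum>y\<in>carrier G. ?c y False))"
    by (simp add: sum.distrib)
  finally show ?thesis
    using sum_card_Int_l_coset[OF finite_carrier parity_class_subset] by simp
qed

lemma card_parity_class_le:
  assumes s: "s \<in> S" and preserving: "side_preserving s"
  shows "2 * card (parity_class b) \<le> card D + card (carrier G)"
proof -
  have s_carrier: "s \<in> carrier G" using s generators_subset by auto
  have "{g \<in> parity_class b. g \<otimes> s \<in> parity_class b} \<subseteq> D"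
  proof
    fix g assume g: "g \<in> {g \<in> parity_class b. g \<otimes> s \<in> parity_class b}"
    then have "g \<in> carrier G" using parity_class_subset by auto
    then have "side_preserving (g \<otimes> s) \<longleftrightarrow> side_preserving g"
      using side_preserving_mult s_carrier preserving by simp
    with g have "g \<otimes> s \<in> L \<longleftrightarrow> g \<in> L" and "g \<in> L \<union> R" "g \<otimes> s \<in> L \<union> R"
      unfolding parity_class_def by auto
    then show "g \<in> D"
      using bipartite_except_sides \<open>g \<in> carrier G\<close> s sides_disjoint unfolding bipartite_except_def by blast
  qed
  then have "card {g \<in> parity_class b. g \<otimes> s \<in> parity_class b} \<le> card D"
    using D_subset finite_carrier by (intro card_mono) (auto intro: finite_subset)
  then show ?thesis
    using card_add_card_le_card_right_mult_stays[OF finite_carrier parity_class_subset[of b] s_carrier]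
    by linarith
qed

lemma generator_not_side_preserving:
  assumes s: "s \<in> S"
  shows "\<not> side_preserving s"
proof
  assume preserving: "side_preserving s"
  let ?p = "real (card (parity_class True))" and ?q = "real (card (parity_class False))"
  let ?e = "real (card D)"
  have "card (parity_class True) + card (parity_class False) \<le> card (carrier G)"
  proof -
    have "parity_class True \<inter> parity_class False = {}" unfolding parity_class_def by auto
    then have "card (parity_class True) + card (parity_class False)
        = card (parity_class True \<union> parity_class False)"
      using parity_class_subset finite_carrier by (intro card_Un_disjoint[symmetric]) (auto intro: finite_subset)
    also have "\<dots> \<le> card (carrier G)" using parity_class_subset finite_carrier by (intro card_mono) auto
    finally show ?thesis .
  qed
  then have "?p + ?q \<le> n" by linarith
  have half: "real (card (parity_class b)) \<le> (?e + n) / 2" for b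
  proof -
    have "real (2 * card (parity_class b)) \<le> real (card D + card (carrier G))"
      using card_parity_class_le[OF s preserving] by (rule of_nat_mono)
    then show ?thesis by simp
  qed
  have "?p * ?p + ?q * ?q \<le> ?p * ((?e + n) / 2) + ?q * ((?e + n) / 2)"
    using half by (intro add_mono mult_left_mono) auto
  also have "\<dots> = (?p + ?q) * ((?e + n) / 2)" by (rule distrib_right[symmetric])
  also have "\<dots> \<le> n * ((?e + n) / 2)"
    using \<open>?p + ?q \<le> n\<close> by (intro mult_right_mono) auto
  also have "\<dots> < 97 / 100 * n * n"
    using defects_small m_le_n m_pos by (simp add: algebra_simps)
  finally show False using sum_squares_parity_classes by simp
qed

lemma cayley_bipartite: "cayley_bipartite G S"
  unfolding cayley_bipartite_def
proof (intro exI conjI ballI)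
  let ?P = "{y \<in> carrier G. side_preserving y}" and ?Q = "{y \<in> carrier G. \<not> side_preserving y}"
  show "?P \<union> ?Q = carrier G" "?P \<inter> ?Q = {}" by auto
  fix g s assume "g \<in> carrier G" "s \<in> S"
  then have "side_preserving (g \<otimes> s) \<longleftrightarrow> \<not> side_preserving g"
    using side_preserving_mult generator_not_side_preserving generators_subset by auto
  then show "\<not> (g \<in> ?P \<and> g \<otimes> s \<in> ?P)" "\<not> (g \<in> ?Q \<and> g \<otimes> s \<in> ?Q)" by auto
qed

end

theorem theorem3:
  fixes G :: "('a, 'b) monoid_scheme" and S :: "'a set"
  assumes "group G"
    and "finite (carrier G)"
    and "card (carrier G) \<ge> 2"
    and "S \<subseteq> carrier G"
    and "generate G S = carrier G"
    and "(\<lambda>s. inv\<^bsub>G\<^esub> s) ` S = S"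
    and "\<not> cayley_bipartite G S"
  shows "h_out G S \<le> 200 * beta_out G S"
proof (rule ccontr)
  assume violated: "\<not> h_out G S \<le> 200 * beta_out G S"
  interpret cayley_graph G S
    using assms(1,2,4,6) by (intro cayley_graph.intro cayley_graph_axioms.intro) auto
  have "carrier G \<noteq> {}" using assms(3) by auto
  then obtain L R where sides: "L \<subseteq> carrier G" "R \<subseteq> carrier G" "L \<inter> R = {}" "L \<union> R \<noteq> {}"
    and beta: "beta_out G S = b_out G S L R"
    using beta_out_attained by blast
  obtain D where D: "D \<subseteq> carrier G" "bipartite_except L R D"
    and few: "real (card D) \<le> beta_out G S * card (L \<union> R)"
    using bipartite_except_few_defects[OF sides(1,2,4)] unfolding beta by blast
  have "0 < card (L \<union> R)" using sides finite_carrier by (simp add: card_gt_0_iff finite_subset)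
  have "200 * real (card D) \<le> 200 * beta_out G S * card (L \<union> R)" using few by simp
  also have "\<dots> < h_out G S * card (L \<union> R)"
    using violated \<open>0 < card (L \<union> R)\<close> by (intro mult_strict_right_mono) auto
  finally have "200 * real (card D) < h_out G S * card (L \<union> R)" .
  then interpret near_bipartite G S L R D
    using sides D assms(3) by (intro near_bipartite.intro near_bipartite_axioms.intro cayley_graph_axioms)
  show False using cayley_bipartite assms(7) by contradiction
qed

end
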